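(* For every term $t\in T( *,\circ,x)$ there exists a positive integer $p$ such that $x^{[n]}\equiv_{\mathtt{ALD}} t*x^{[n-p]}$ holds for all sufficiently large $n$.
   Context: $T( *,\circ,x)$ is the set of terms built from a single variable $x$ using two binary operation symbols $*$ and $\circ$. Right vines: $x^{[1]}=x$ and $x^{[n]}=x*x^{[n-1]}$ for $n\ge2$. $\equiv_{\mathtt{ALD}}$ is the congruence on terms generated by the three laws $x*(y*z)=(x*y)*(x*z)$, $x*(y\circ z)=(x*y)\circ(x*z)$, $x*(y*z)=(x\circ y)*z$ (i.e. equality modulo these identities). *)

theory Defs
  imports Main
begin

datatype trm = X | Star trm trm | Circ trm trm

text \<open>Right vines: x^[1] = x, x^[n] = x * x^[n-1]. (x^[0] is set to x as a dummy value.)\<close>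
fun rvine :: "nat \<Rightarrow> trm" where
  "rvine 0 = X"
| "rvine (Suc 0) = X"
| "rvine (Suc (Suc n)) = Star X (rvine (Suc n))"

inductive ald_eq :: "trm \<Rightarrow> trm \<Rightarrow> bool" where
  ld:   "ald_eq (Star a (Star b c)) (Star (Star a b) (Star a c))"
| ldc:  "ald_eq (Star a (Circ b c)) (Circ (Star a b) (Star a c))"
| circ: "ald_eq (Star a (Star b c)) (Star (Circ a b) c)"
| refl: "ald_eq a a"
| sym:  "ald_eq a b \<Longrightarrow> ald_eq b a"
| trans: "ald_eq a b \<Longrightarrow> ald_eq b c \<Longrightarrow> ald_eq a c"
| cong_star: "ald_eq a a' \<Longrightarrow> ald_eq b b' \<Longrightarrow> ald_eq (Star a b) (Star a' b')"
| cong_circ: "ald_eq a a' \<Longrightarrow> ald_eq b b' \<Longrightarrow> ald_eq (Circ a b) (Circ a' b')"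

end

theory Submission
  imports Defs
begin

text \<open>Say that \<open>t\<close> shifts vines by \<open>p\<close> if \<open>x^[n] \<equiv> t * x^[n-p]\<close> for all large \<open>n\<close>;
  the proof is by induction on \<open>t\<close>. The variable shifts by 1. If \<open>t\<^sub>1\<close> and \<open>t\<^sub>2\<close> shift by
  \<open>p\<^sub>1\<close> and \<open>p\<^sub>2\<close>, then \<open>x^[n] \<equiv> t\<^sub>1 * (t\<^sub>2 * x^[m])\<close> with \<open>m = n - p\<^sub>1 - p\<^sub>2\<close>. The law
  \<open>x*(y*z) = (x\<circ>y)*z\<close> makes this \<open>(t\<^sub>1\<circ>t\<^sub>2) * x^[m]\<close>, so \<open>t\<^sub>1\<circ>t\<^sub>2\<close> shifts by \<open>p\<^sub>1 + p\<^sub>2\<close>.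
  Left self-distributivity makes it \<open>(t\<^sub>1*t\<^sub>2) * (t\<^sub>1 * x^[m])\<close>, and \<open>t\<^sub>1 * x^[m] \<equiv> x^[n-p\<^sub>2]\<close>
  by the hypothesis on \<open>t\<^sub>1\<close> at \<open>n - p\<^sub>2\<close>, so \<open>t\<^sub>1*t\<^sub>2\<close> shifts by \<open>p\<^sub>2\<close>.\<close>

declare ald_eq.trans [trans]

lemma ald_eq_cong_star_right: "ald_eq b b' \<Longrightarrow> ald_eq (Star a b) (Star a b')"
  by (rule ald_eq.cong_star[OF ald_eq.refl])

lemma rvine_Suc: "n \<ge> 1 \<Longrightarrow> rvine (Suc n) = Star X (rvine n)"
  by (cases n) auto

definition vine_shift :: "trm \<Rightarrow> nat \<Rightarrow> bool" where
  "vine_shift t p \<longleftrightarrow> (\<forall>\<^sub>F n in sequentially. ald_eq (rvine n) (Star t (rvine (n - p))))"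

lemma eventually_sequentially_diff:
  "eventually P sequentially \<Longrightarrow> eventually (\<lambda>n. P (n - k)) sequentially"
  using eventually_compose_filterlim filterlim_minus_const_nat_at_top by blast

lemma vine_shift_X: "vine_shift X 1"
  unfolding vine_shift_def eventually_sequentially
  by (rule exI[of _ 2]) (auto simp: rvine_Suc[symmetric] ald_eq.refl)

lemma vine_shift_Circ:
  assumes "vine_shift t\<^sub>1 p\<^sub>1" and "vine_shift t\<^sub>2 p\<^sub>2"
  shows "vine_shift (Circ t\<^sub>1 t\<^sub>2) (p\<^sub>1 + p\<^sub>2)"
proof -
  note shift\<^sub>1 = assms(1)[unfolded vine_shift_def]
  note shift\<^sub>2 = assms(2)[unfolded vine_shift_def]
  from shift\<^sub>1 eventually_sequentially_diff[OF shift\<^sub>2, of p\<^sub>1] show ?thesis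
    unfolding vine_shift_def
  proof eventually_elim
    case (elim n)
    have "ald_eq (rvine n) (Star t\<^sub>1 (rvine (n - p\<^sub>1)))" by fact
    also have "ald_eq \<dots> (Star t\<^sub>1 (Star t\<^sub>2 (rvine (n - p\<^sub>1 - p\<^sub>2))))"
      using elim(2) by (rule ald_eq_cong_star_right)
    also have "ald_eq \<dots> (Star (Circ t\<^sub>1 t\<^sub>2) (rvine (n - (p\<^sub>1 + p\<^sub>2))))"
      using ald_eq.circ by simp
    finally show ?case .
  qed
qed

lemma vine_shift_Star:
  assumes "vine_shift t\<^sub>1 p\<^sub>1" and "vine_shift t\<^sub>2 p\<^sub>2"
  shows "vine_shift (Star t\<^sub>1 t\<^sub>2) p\<^sub>2"
proof -
  note shift\<^sub>1 = assms(1)[unfolded vine_shift_def]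
  note shift\<^sub>2 = assms(2)[unfolded vine_shift_def]
  from shift\<^sub>1 eventually_sequentially_diff[OF shift\<^sub>2, of p\<^sub>1]
    eventually_sequentially_diff[OF shift\<^sub>1, of p\<^sub>2]
  show ?thesis
    unfolding vine_shift_def
  proof eventually_elim
    case (elim n)
    have "ald_eq (rvine n) (Star t\<^sub>1 (rvine (n - p\<^sub>1)))" by fact
    also have "ald_eq \<dots> (Star t\<^sub>1 (Star t\<^sub>2 (rvine (n - p\<^sub>1 - p\<^sub>2))))"
      using elim(2) by (rule ald_eq_cong_star_right)
    also have "ald_eq \<dots> (Star (Star t\<^sub>1 t\<^sub>2) (Star t\<^sub>1 (rvine (n - p\<^sub>2 - p\<^sub>1))))"
      unfolding diff_commute[of n p\<^sub>2 p\<^sub>1] by (rule ald_eq.ld)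
    also have "ald_eq \<dots> (Star (Star t\<^sub>1 t\<^sub>2) (rvine (n - p\<^sub>2)))"
      using elim(3) by (rule ald_eq_cong_star_right[OF ald_eq.sym])
    finally show ?case .
  qed
qed

lemma vine_shift_exists: "\<exists>p > 0. vine_shift t p"
proof (induction t)
  case X
  show ?case using vine_shift_X by blast
next
  case (Star t\<^sub>1 t\<^sub>2)
  then show ?case using vine_shift_Star by blast
next
  case (Circ t\<^sub>1 t\<^sub>2)
  then show ?case using vine_shift_Circ add_pos_pos by blast
qed

theorem lemma3p3:
  shows "\<forall>t. \<exists>p::nat. p > 0 \<and> (\<exists>N. N > p \<and>
           (\<forall>n\<ge>N. ald_eq (rvine n) (Star t (rvine (n - p)))))"
proof
  fix t
  obtain p N where "p > 0" and shift: "\<forall>n\<ge>N. ald_eq (rvine n) (Star t (rvine (n - p)))"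
    using vine_shift_exists[of t] unfolding vine_shift_def eventually_sequentially by blast
  then have "N + p + 1 > p \<and> (\<forall>n\<ge>N + p + 1. ald_eq (rvine n) (Star t (rvine (n - p))))"
    by simp
  with \<open>p > 0\<close> show "\<exists>p. p > 0 \<and> (\<exists>N. N > p \<and> (\<forall>n\<ge>N. ald_eq (rvine n) (Star t (rvine (n - p)))))"
    by blast
qed

end
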